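(* Let $m_1,m_2$ be positive integers and let $n$ be an even integer with $m_2 \geq n \geq \lceil \log m_1 \rceil+\lceil \log m_2 \rceil+1$. Then $BR(C_{n},K_{m_1,m_2})\leq 32m_1+49m_2$.
   Context: $C_n$ is the cycle on $n$ vertices and $K_{a,b}$ the complete bipartite graph with parts of sizes $a$ and $b$. For bipartite graphs $G_1,\ldots,G_k$, the bipartite Ramsey number $BR(G_1,\ldots,G_k)$ is the smallest integer $b$ such that for every coloring of the edges of $K_{b,b}$ with colors $1,\ldots,k$ there is, for some $i$, a copy of $G_i$ all of whose edges have color $i$. $\log$ denotes the logarithm to base $2$. *)

theory Defs
  imports Complex_Main
begin

text \<open>The host graph K_{b,b}: left part {..<b}, right part {..<b}; a colouring is
  c x y = colour of the edge between left vertex x and right vertex y.\<close>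

text \<open>A copy of the (even) cycle C_n, n = 2k, in colour col: distinct left vertices
  a 0, ..., a (k-1) and distinct right vertices d 0, ..., d (k-1) with the cycle
  a 0 - d 0 - a 1 - d 1 - ... - a (k-1) - d (k-1) - a 0 monochromatic.\<close>
definition has_cycle_copy :: "nat \<Rightarrow> (nat \<Rightarrow> nat \<Rightarrow> nat) \<Rightarrow> nat \<Rightarrow> nat \<Rightarrow> bool" where
  "has_cycle_copy b c col n \<longleftrightarrow>
     (\<exists>a d :: nat \<Rightarrow> nat.
        inj_on a {..<n div 2} \<and> inj_on d {..<n div 2} \<and>
        a ` {..<n div 2} \<subseteq> {..<b} \<and> d ` {..<n div 2} \<subseteq> {..<b} \<and>
        (\<forall>i < n div 2. c (a i) (d i) = col \<and> c (a ((i + 1) mod (n div 2))) (d i) = col))"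

definition has_Kst_copy :: "nat \<Rightarrow> (nat \<Rightarrow> nat \<Rightarrow> nat) \<Rightarrow> nat \<Rightarrow> nat \<Rightarrow> nat \<Rightarrow> bool" where
  "has_Kst_copy b c col s t \<longleftrightarrow>
     (\<exists>A B. A \<subseteq> {..<b} \<and> B \<subseteq> {..<b} \<and>
        ((card A = s \<and> card B = t) \<or> (card A = t \<and> card B = s)) \<and>
        (\<forall>x\<in>A. \<forall>y\<in>B. c x y = col))"

definition BR_cycle_K :: "nat \<Rightarrow> nat \<Rightarrow> nat \<Rightarrow> nat" where
  "BR_cycle_K n s t = (LEAST b. \<forall>c :: nat \<Rightarrow> nat \<Rightarrow> nat.
      (\<forall>x<b. \<forall>y<b. c x y \<in> {1, 2}) \<longrightarrow>
      has_cycle_copy b c 1 n \<or> has_Kst_copy b c 2 s t)"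

end

theory Submission
  imports Defs
begin

text \<open>If a red/blue colouring of \<open>K\<^sub>b\<^sub>,\<^sub>b\<close> has no blue \<open>K\<^sub>m\<^sub>1\<^sub>,\<^sub>m\<^sub>2\<close>, any \<open>m\<^sub>1\<close>
  vertices on one side and \<open>m\<^sub>2\<close> on the other span a red edge. Split the vertices into three
  blocks. In each of the first two, deleting a maximal set with few red neighbours, together
  with those neighbours, leaves a set \<open>H\<close> in which every one-sided \<open>X\<close> with
  \<open>|X| \<le> m\<^sub>1 + m\<^sub>2\<close> has more than \<open>3|X|\<close> red neighbours. In the third block a depth-first
  search finds a long red path, and on it two vertices \<open>p\<close>, \<open>q\<close> at distance
  \<open>\<lambda> = n - 1 - d\<^sub>1 - d\<^sub>2\<close> with at least two red neighbours in \<open>H\<^sub>1\<close> and \<open>H\<^sub>2\<close> respectively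
  (only few vertices fail this). Expansion lets us grow from \<open>p\<close> and \<open>q\<close> red trees with
  layers of sizes \<open>1, 2, 4, \<dots>\<close> up to depths \<open>d\<^sub>i = \<lceil>log m\<^sub>i\<rceil>\<close>. The last layers have at
  least \<open>m\<^sub>1\<close> and \<open>m\<^sub>2\<close> vertices and lie on opposite sides since \<open>n\<close> is even, so a red
  edge joins them, closing a red cycle of length \<open>d\<^sub>1 + \<lambda> + d\<^sub>2 + 1 = n\<close>.\<close>

section \<open>The red graph of a colouring\<close>

text \<open>Vertices of \<open>K\<^sub>b\<^sub>,\<^sub>b\<close> are pairs \<open>(False, x)\<close> (left vertex \<open>x\<close>) and \<open>(True, y)\<close>
  (right vertex \<open>y\<close>); \<open>red_edge c\<close> is the graph of colour-1 edges.\<close>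

definition vertices :: "nat \<Rightarrow> (bool \<times> nat) set" where
  "vertices b = UNIV \<times> {..<b}"

definition side :: "bool \<Rightarrow> (bool \<times> nat) set" where
  "side s = {v. fst v = s}"

lemma mem_vertices [simp]: "v \<in> vertices b \<longleftrightarrow> snd v < b"
  by (cases v) (auto simp: vertices_def)

lemma mem_side [simp]: "v \<in> side s \<longleftrightarrow> fst v = s"
  by (simp add: side_def)

lemma side_disjoint: "side s \<inter> side (\<not> s) = {}"
  by auto

lemma finite_vertices [simp]: "finite (vertices b)"
  by (simp add: vertices_def)

lemma card_side: "finite A \<Longrightarrow> card A = card (A \<inter> side False) + card (A \<inter> side True)"
proof -
  assume "finite A"
  have "card A = card (A \<inter> side False \<union> A \<inter> side True)"
    by (rule arg_cong[where f = card]) auto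
  also have "\<dots> = card (A \<inter> side False) + card (A \<inter> side True)"
    by (rule card_Un_disjoint) (use \<open>finite A\<close> in auto)
  finally show ?thesis .
qed

lemma card_snd_image_side:
  assumes "X \<subseteq> side s"
  shows "card (snd ` X) = card X"
proof (rule card_image, rule inj_onI)
  fix u v
  assume "u \<in> X" "v \<in> X" "snd u = snd v"
  moreover have "fst u = fst v"
    using subsetD[OF assms \<open>u \<in> X\<close>] subsetD[OF assms \<open>v \<in> X\<close>] by simp
  ultimately show "u = v"
    by (simp add: prod_eq_iff)
qed

definition red_edge :: "(nat \<Rightarrow> nat \<Rightarrow> nat) \<Rightarrow> bool \<times> nat \<Rightarrow> bool \<times> nat \<Rightarrow> bool" where
  "red_edge c u v \<longleftrightarrow> fst u \<noteq> fst v \<and>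
     (if fst u then c (snd v) (snd u) else c (snd u) (snd v)) = 1"

definition red_nbs :: "(nat \<Rightarrow> nat \<Rightarrow> nat) \<Rightarrow> (bool \<times> nat) set \<Rightarrow> (bool \<times> nat) set \<Rightarrow> (bool \<times> nat) set"
  where "red_nbs c A X = {v \<in> A. \<exists>x\<in>X. red_edge c x v}"

lemma red_edge_sym: "red_edge c u v \<longleftrightarrow> red_edge c v u"
  by (auto simp: red_edge_def)

lemma red_edge_flip: "(\<lambda>u v. red_edge c v u) = red_edge c"
  using red_edge_sym by blast

lemma red_edge_side: "red_edge c u v \<Longrightarrow> fst v = (\<not> fst u)"
  by (auto simp: red_edge_def)

lemma red_edge_colour:
  assumes "red_edge c u v"
  shows "\<not> fst u \<Longrightarrow> c (snd u) (snd v) = 1" and "fst u \<Longrightarrow> c (snd v) (snd u) = 1"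
  using assms by (simp_all add: red_edge_def)

lemma red_nbs_subset: "red_nbs c A X \<subseteq> A"
  by (auto simp: red_nbs_def)

lemma finite_red_nbs: "finite A \<Longrightarrow> finite (red_nbs c A X)"
  using finite_subset[OF red_nbs_subset] .

lemma red_nbs_side: "X \<subseteq> side s \<Longrightarrow> red_nbs c A X \<subseteq> side (\<not> s)"
  by (auto simp: red_nbs_def red_edge_def)

lemma card_red_nbs_le: "finite X \<Longrightarrow> card (red_nbs c A X) \<le> (\<Sum>x\<in>X. card (red_nbs c A {x}))"
proof -
  assume "finite X"
  have "red_nbs c A X = (\<Union>x\<in>X. red_nbs c A {x})"
    by (auto simp: red_nbs_def)
  then show ?thesis using card_UN_le[OF \<open>finite X\<close>] by simp
qed

text \<open>As the side \<open>s\<close> is arbitrary, this covers both orientations of \<open>K\<^sub>m\<^sub>1\<^sub>,\<^sub>m\<^sub>2\<close>.\<close>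

definition red_dense :: "(nat \<Rightarrow> nat \<Rightarrow> nat) \<Rightarrow> nat \<Rightarrow> nat \<Rightarrow> nat \<Rightarrow> bool" where
  "red_dense c b m1 m2 \<longleftrightarrow> (\<forall>s X Y. X \<subseteq> vertices b \<inter> side s \<longrightarrow> Y \<subseteq> vertices b \<inter> side (\<not> s) \<longrightarrow>
      m1 \<le> card X \<longrightarrow> m2 \<le> card Y \<longrightarrow> (\<exists>x\<in>X. \<exists>y\<in>Y. red_edge c x y))"

lemma red_dense_swap:
  assumes "red_dense c b m1 m2"
  shows "red_dense c b m2 m1"
  unfolding red_dense_def
proof (intro allI impI)
  fix s X Y
  assume "X \<subseteq> vertices b \<inter> side s" "Y \<subseteq> vertices b \<inter> side (\<not> s)" "m2 \<le> card X" "m1 \<le> card Y"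
  moreover have "X \<subseteq> vertices b \<inter> side (\<not> \<not> s)"
    using \<open>X \<subseteq> vertices b \<inter> side s\<close> by simp
  ultimately obtain y x where "y \<in> Y" "x \<in> X" "red_edge c y x"
    using assms unfolding red_dense_def by blast
  then show "\<exists>x\<in>X. \<exists>y\<in>Y. red_edge c x y"
    using red_edge_sym by blast
qed

lemma red_dense_edge:
  assumes "red_dense c b (m False) (m True)"
    and "X \<subseteq> vertices b \<inter> side s" "Y \<subseteq> vertices b \<inter> side (\<not> s)" "m s \<le> card X" "m (\<not> s) \<le> card Y"
  shows "\<exists>x\<in>X. \<exists>y\<in>Y. red_edge c x y"
proof -
  have "red_dense c b (m s) (m (\<not> s))"
    using assms(1) red_dense_swap by (cases s) auto
  then show ?thesis
    using assms(2-) unfolding red_dense_def by blast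
qed

lemma blue_K_if_no_red_edge:
  assumes colours: "\<forall>x<b. \<forall>y<b. c x y \<in> {1, 2}"
    and X: "X \<subseteq> vertices b \<inter> side False" and Y: "Y \<subseteq> vertices b \<inter> side True"
    and no_red: "\<forall>x\<in>X. \<forall>y\<in>Y. \<not> red_edge c x y"
  shows "snd ` X \<subseteq> {..<b} \<and> snd ` Y \<subseteq> {..<b} \<and> card (snd ` X) = card X \<and> card (snd ` Y) = card Y
    \<and> (\<forall>x\<in>snd ` X. \<forall>y\<in>snd ` Y. c x y = 2)"
proof (intro conjI ballI)
  fix x y
  assume "x \<in> snd ` X" "y \<in> snd ` Y"
  then obtain u v where "u \<in> X" "v \<in> Y" "x = snd u" "y = snd v"
    by blast
  moreover have "fst u = False" "fst v = True" "snd u < b" "snd v < b"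
    using subsetD[OF X \<open>u \<in> X\<close>] subsetD[OF Y \<open>v \<in> Y\<close>] by auto
  moreover have "\<not> red_edge c u v" "c (snd u) (snd v) \<in> {1, 2}"
    using no_red colours \<open>u \<in> X\<close> \<open>v \<in> Y\<close> \<open>snd u < b\<close> \<open>snd v < b\<close> by blast+
  ultimately show "c x y = 2"
    by (auto simp: red_edge_def)
qed (use X Y card_snd_image_side in auto)

lemma red_dense_if_no_blue_K:
  assumes colours: "\<forall>x<b. \<forall>y<b. c x y \<in> {1, 2}" and no_blue: "\<not> has_Kst_copy b c 2 m1 m2"
  shows "red_dense c b m1 m2"
  unfolding red_dense_def
proof (intro allI impI)
  fix s X Y
  assume X: "X \<subseteq> vertices b \<inter> side s" and Y: "Y \<subseteq> vertices b \<inter> side (\<not> s)"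
    and "m1 \<le> card X" "m2 \<le> card Y"
  then obtain X' Y' where X': "X' \<subseteq> X" "card X' = m1" and Y': "Y' \<subseteq> Y" "card Y' = m2"
    by (meson obtain_subset_with_card_n)
  show "\<exists>x\<in>X. \<exists>y\<in>Y. red_edge c x y"
  proof (rule ccontr)
    assume "\<not> ?thesis"
    then have no_red: "\<forall>x\<in>X'. \<forall>y\<in>Y'. \<not> red_edge c x y" "\<forall>y\<in>Y'. \<forall>x\<in>X'. \<not> red_edge c y x"
      using X' Y' red_edge_sym by blast+
    have "has_Kst_copy b c 2 m1 m2"
    proof (cases s)
      case False
      then have "X' \<subseteq> vertices b \<inter> side False" "Y' \<subseteq> vertices b \<inter> side True"
        using X X'(1) Y Y'(1) by auto
      from blue_K_if_no_red_edge[OF colours this no_red(1)] show ?thesis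
        unfolding has_Kst_copy_def using X'(2) Y'(2) by blast
    next
      case True
      then have "Y' \<subseteq> vertices b \<inter> side False" "X' \<subseteq> vertices b \<inter> side True"
        using X X'(1) Y Y'(1) by auto
      from blue_K_if_no_red_edge[OF colours this no_red(2)] show ?thesis
        unfolding has_Kst_copy_def using X'(2) Y'(2) by blast
    qed
    with no_blue show False ..
  qed
qed

lemma red_dense_nbs_large:
  assumes dense: "red_dense c b (m False) (m True)" and A: "A \<subseteq> vertices b" "finite A"
    and S: "S \<subseteq> vertices b \<inter> side s" "m s \<le> card S"
  shows "card (A \<inter> side (\<not> s)) < card (red_nbs c A S) + m (\<not> s)"
proof -
  define Y where "Y = A \<inter> side (\<not> s) - red_nbs c A S"
  have "card Y < m (\<not> s)"
  proof (rule ccontr)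
    assume "\<not> card Y < m (\<not> s)"
    then obtain x y where "x \<in> S" "y \<in> Y" "red_edge c x y"
      using red_dense_edge[OF dense S(1), of Y] A S(2) unfolding Y_def by force
    then show False
      unfolding Y_def red_nbs_def by blast
  qed
  moreover have "card (A \<inter> side (\<not> s)) \<le> card (Y \<union> red_nbs c A S)"
    by (rule card_mono) (auto simp: Y_def A(2) finite_red_nbs)
  moreover have "card (Y \<union> red_nbs c A S) \<le> card Y + card (red_nbs c A S)"
    by (rule card_Un_le)
  ultimately show ?thesis by linarith
qed

section \<open>Expanding subsets\<close>

definition expands :: "(nat \<Rightarrow> nat \<Rightarrow> nat) \<Rightarrow> (bool \<times> nat) set \<Rightarrow> nat \<Rightarrow> bool" where
  "expands c H t \<longleftrightarrow> (\<forall>s X. X \<subseteq> H \<inter> side s \<longrightarrow> 0 < card X \<longrightarrow> card X \<le> t \<longrightarrow>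
      3 * card X < card (red_nbs c H X))"

text \<open>Removing a maximal such pair, together with its red neighbourhood, leaves an expanding
  set.\<close>

definition nbs_bounded ::
  "(nat \<Rightarrow> nat \<Rightarrow> nat) \<Rightarrow> (bool \<times> nat) set \<Rightarrow> (bool \<Rightarrow> nat) \<Rightarrow> (bool \<Rightarrow> (bool \<times> nat) set) \<Rightarrow> bool"
  where "nbs_bounded c A m C \<longleftrightarrow> (\<forall>s. C s \<subseteq> A \<inter> side s \<and> card (C s) < m s \<and>
      card (red_nbs c A (C s) - C (\<not> s)) \<le> 3 * card (C s))"

lemma nbs_bounded_extend_nbs:
  assumes C: "nbs_bounded c A m C" and X: "X \<subseteq> A - (\<Union>s. C s \<union> red_nbs c A (C s))" "X \<subseteq> side s"
  shows "red_nbs c A (C s \<union> X) - C (\<not> s) \<subseteq>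
      (red_nbs c A (C s) - C (\<not> s)) \<union> red_nbs c (A - (\<Union>s. C s \<union> red_nbs c A (C s))) X"
proof
  fix v
  assume v: "v \<in> red_nbs c A (C s \<union> X) - C (\<not> s)"
  show "v \<in> (red_nbs c A (C s) - C (\<not> s)) \<union> red_nbs c (A - (\<Union>s. C s \<union> red_nbs c A (C s))) X"
  proof (cases "v \<in> red_nbs c A (C s)")
    case False
    with v obtain x where "x \<in> X" "red_edge c x v" "v \<in> A"
      by (auto simp: red_nbs_def)
    then have "fst v = (\<not> s)"
      using X(2) red_edge_side by fastforce
    moreover have "C s \<subseteq> side s" "red_nbs c A (C (\<not> s)) \<subseteq> side s"
      using C red_nbs_side[of "C (\<not> s)" "\<not> s"] unfolding nbs_bounded_def by auto
    ultimately have "v \<notin> C t \<union> red_nbs c A (C t)" for t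
      using v False by (cases "t = s") (auto dest: subsetD)
    then have "v \<notin> (\<Union>t. C t \<union> red_nbs c A (C t))"
      by blast
    then show ?thesis
      using \<open>x \<in> X\<close> \<open>red_edge c x v\<close> \<open>v \<in> A\<close> unfolding red_nbs_def by blast
  qed (use v in blast)
qed

lemma nbs_bounded_extend_card:
  assumes C: "nbs_bounded c A m C" and "finite A" and H: "H = A - (\<Union>s. C s \<union> red_nbs c A (C s))"
    and X: "X \<subseteq> H \<inter> side s" and few: "card (red_nbs c H X) \<le> 3 * card X"
  shows "card (red_nbs c A (C s \<union> X) - C (\<not> s)) \<le> 3 * card (C s \<union> X)"
proof -
  have "C s \<subseteq> A" "card (red_nbs c A (C s) - C (\<not> s)) \<le> 3 * card (C s)"
    using C unfolding nbs_bounded_def by blast+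
  have "finite X" "finite (C s)" "C s \<inter> X = {}"
    using X H \<open>C s \<subseteq> A\<close> \<open>finite A\<close> finite_subset by auto
  have "card (red_nbs c A (C s \<union> X) - C (\<not> s)) \<le> card ((red_nbs c A (C s) - C (\<not> s)) \<union> red_nbs c H X)"
    using nbs_bounded_extend_nbs[OF C, of X s] X H \<open>finite A\<close>
    by (intro card_mono) (auto simp: finite_red_nbs)
  also have "\<dots> \<le> card (red_nbs c A (C s) - C (\<not> s)) + card (red_nbs c H X)"
    by (rule card_Un_le)
  also have "\<dots> \<le> 3 * card (C s \<union> X)"
    using \<open>card (red_nbs c A (C s) - C (\<not> s)) \<le> _\<close> few \<open>finite X\<close> \<open>finite (C s)\<close> \<open>C s \<inter> X = {}\<close>
    by (simp add: card_Un_disjoint)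
  finally show ?thesis .
qed

lemma nbs_bounded_extend:
  assumes C: "nbs_bounded c A m C" and "finite A" and H: "H = A - (\<Union>s. C s \<union> red_nbs c A (C s))"
    and X: "X \<subseteq> H \<inter> side s" and few: "card (red_nbs c H X) \<le> 3 * card X"
    and small: "card (C s \<union> X) < m s"
  shows "nbs_bounded c A m (C(s := C s \<union> X))"
  unfolding nbs_bounded_def
proof
  fix u
  have C_all: "C u \<subseteq> A \<inter> side u" "card (C u) < m u"
    "card (red_nbs c A (C u) - C (\<not> u)) \<le> 3 * card (C u)" for u
    using C unfolding nbs_bounded_def by blast+
  have "card (red_nbs c A (C (\<not> s)) - (C s \<union> X)) \<le> card (red_nbs c A (C (\<not> s)) - C s)"
    using \<open>finite A\<close> by (intro card_mono) (auto simp: finite_red_nbs)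
  then show "(C(s := C s \<union> X)) u \<subseteq> A \<inter> side u \<and> card ((C(s := C s \<union> X)) u) < m u \<and>
      card (red_nbs c A ((C(s := C s \<union> X)) u) - (C(s := C s \<union> X)) (\<not> u)) \<le> 3 * card ((C(s := C s \<union> X)) u)"
    using C_all[of s] C_all[of "\<not> s"] X H small nbs_bounded_extend_card[OF assms(1-5)]
    by (cases "u = s") auto
qed

text \<open>If some one-sided \<open>X \<subseteq> H\<close> failed to expand, adding it to the maximal pair \<open>C\<close> would
  either give a larger pair or, once \<open>C s \<union> X\<close> reaches size \<open>m s\<close>, a set whose few red
  neighbours contradict density.\<close>

lemma maximal_nbs_bounded_expands:
  assumes dense: "red_dense c b (m False) (m True)" and A: "A \<subseteq> vertices b" "finite A"
    and big: "\<forall>s. 3 * (m s + t) + 2 * m (\<not> s) \<le> card (A \<inter> side (\<not> s))"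
    and C: "nbs_bounded c A m C"
    and maximal: "\<forall>C'. nbs_bounded c A m C' \<longrightarrow>
      card (C' False) + card (C' True) \<le> card (C False) + card (C True)"
    and H: "H = A - (\<Union>s. C s \<union> red_nbs c A (C s))"
  shows "expands c H t"
  unfolding expands_def
proof (intro allI impI)
  fix s X
  assume X: "X \<subseteq> H \<inter> side s" "0 < card X" "card X \<le> t"
  have C_all: "C u \<subseteq> A \<inter> side u" "card (C u) < m u" for u
    using C unfolding nbs_bounded_def by blast+
  have finite_C: "finite (C u)" for u
    by (rule finite_subset[OF _ A(2)]) (use C_all(1) in blast)
  have "finite X" "C s \<inter> X = {}"
    using X(1,2) card_gt_0_iff H by blast+
  then have card_CX: "card (C s \<union> X) = card (C s) + card X"
    by (simp add: card_Un_disjoint finite_C)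
  show "3 * card X < card (red_nbs c H X)"
  proof (rule ccontr)
    assume "\<not> ?thesis"
    then have few: "card (red_nbs c H X) \<le> 3 * card X"
      by simp
    show False
    proof (cases "card (C s \<union> X) < m s")
      case True
      then have "nbs_bounded c A m (C(s := C s \<union> X))"
        by (rule nbs_bounded_extend[OF C A(2) H X(1) few])
      then have "card ((C(s := C s \<union> X)) False) + card ((C(s := C s \<union> X)) True) \<le>
          card (C False) + card (C True)"
        using maximal by blast
      then show False
        using card_CX X(2) by (cases s) auto
    next
      case False
      have "C s \<union> X \<subseteq> vertices b \<inter> side s"
        using C_all(1)[of s] X(1) H A(1) by auto
      then have "card (A \<inter> side (\<not> s)) < card (red_nbs c A (C s \<union> X)) + m (\<not> s)"
        using red_dense_nbs_large[OF dense A] False by simp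
      moreover have "card (red_nbs c A (C s \<union> X)) \<le>
          card (red_nbs c A (C s \<union> X) - C (\<not> s)) + card (C (\<not> s))"
        using diff_card_le_card_Diff[OF finite_C] by (simp add: le_diff_conv)
      ultimately show False
        using nbs_bounded_extend_card[OF C A(2) H X(1) few] big[rule_format, of s, unfolded distrib_left]
          card_CX C_all(2)[of s] C_all(2)[of "\<not> s"] X(3) by linarith
    qed
  qed
qed

lemma nbs_bounded_card_side_le:
  assumes C: "nbs_bounded c A m C" and "finite A"
    and H: "H = A - (\<Union>s. C s \<union> red_nbs c A (C s))"
  shows "card (A \<inter> side s) \<le> card (H \<inter> side s) + m s + 3 * m (\<not> s)"
proof -
  have C_all: "C u \<subseteq> A \<inter> side u" "card (C u) < m u"
    "card (red_nbs c A (C u) - C (\<not> u)) \<le> 3 * card (C u)" for u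
    using C unfolding nbs_bounded_def by blast+
  have "red_nbs c A (C s) \<subseteq> side (\<not> s)"
    using C_all(1) red_nbs_side by blast
  then have "A \<inter> side s \<subseteq> (H \<inter> side s \<union> C s) \<union> (red_nbs c A (C (\<not> s)) - C s)"
    using C_all(1)[of "\<not> s"] H by (cases s) (auto simp: UNIV_bool)
  then have "card (A \<inter> side s) \<le> card ((H \<inter> side s \<union> C s) \<union> (red_nbs c A (C (\<not> s)) - C s))"
    using \<open>finite A\<close> H by (intro card_mono) (auto simp: finite_red_nbs intro: finite_subset[OF C_all(1)[THEN le_infE]])
  also have "\<dots> \<le> card (H \<inter> side s) + card (C s) + card (red_nbs c A (C (\<not> s)) - C s)"
    using card_Un_le[of "H \<inter> side s" "C s"] card_Un_le[of "H \<inter> side s \<union> C s" "red_nbs c A (C (\<not> s)) - C s"]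
    by linarith
  finally show ?thesis
    using C_all(2)[of s] C_all(2)[of "\<not> s"] C_all(3)[of "\<not> s"] by simp
qed

lemma exists_expanding_subset:
  assumes dense: "red_dense c b (m False) (m True)" and A: "A \<subseteq> vertices b" "finite A"
    and pos: "\<forall>s. 0 < m s"
    and big: "\<forall>s. 3 * (m s + t) + 2 * m (\<not> s) \<le> card (A \<inter> side (\<not> s))"
  shows "\<exists>H\<subseteq>A. expands c H t \<and> (\<forall>s. card (A \<inter> side s) \<le> card (H \<inter> side s) + m s + 3 * m (\<not> s))"
proof -
  have "nbs_bounded c A m (\<lambda>_. {})"
    using pos by (simp add: nbs_bounded_def red_nbs_def)
  moreover have "\<forall>C. nbs_bounded c A m C \<longrightarrow> card (C False) + card (C True) < m False + m True"
    unfolding nbs_bounded_def by (metis add_strict_mono)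
  ultimately obtain C where C: "nbs_bounded c A m C"
    and maximal: "\<forall>C'. nbs_bounded c A m C' \<longrightarrow>
      card (C' False) + card (C' True) \<le> card (C False) + card (C True)"
    using ex_has_greatest_nat[where f = "\<lambda>C. card (C False) + card (C True)"] by blast
  define H where "H = A - (\<Union>s. C s \<union> red_nbs c A (C s))"
  have "expands c H t"
    by (rule maximal_nbs_bounded_expands[OF dense A big C maximal H_def])
  moreover have "\<forall>s. card (A \<inter> side s) \<le> card (H \<inter> side s) + m s + 3 * m (\<not> s)"
    using nbs_bounded_card_side_le[OF C A(2) H_def] by blast
  ultimately show ?thesis
    unfolding H_def by blast
qed

lemma card_vertices_few_red_nbs:
  assumes dense: "red_dense c b (m False) (m True)" and H: "H \<subseteq> vertices b" "finite H"
    and Z: "Z \<subseteq> vertices b" "finite Z" and few: "\<forall>z\<in>Z. card (red_nbs c H {z}) \<le> 1"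
    and big: "\<forall>s. m False + m True \<le> card (H \<inter> side s)"
  shows "card Z + 2 \<le> m False + m True"
proof -
  have "card (Z \<inter> side s) < m s" for s
  proof (rule ccontr)
    assume "\<not> card (Z \<inter> side s) < m s"
    then obtain Z' where Z': "Z' \<subseteq> Z \<inter> side s" "card Z' = m s" "finite Z'"
      by (meson not_less obtain_subset_with_card_n)
    have "card (red_nbs c H Z') \<le> (\<Sum>z\<in>Z'. card (red_nbs c H {z}))"
      using card_red_nbs_le[OF Z'(3)] .
    also have "\<dots> \<le> (\<Sum>z\<in>Z'. 1)"
      by (rule sum_mono) (use few Z'(1) in blast)
    finally have "card (red_nbs c H Z') \<le> m s"
      using Z'(2) by simp
    moreover have "card (H \<inter> side (\<not> s)) < card (red_nbs c H Z') + m (\<not> s)"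
      using red_dense_nbs_large[OF dense H] Z' Z(1) by auto
    moreover have "m s + m (\<not> s) = m False + m True"
      by (cases s) auto
    moreover have "m False + m True \<le> card (H \<inter> side (\<not> s))"
      using big by blast
    ultimately show False
      by linarith
  qed
  from this[of False] this[of True] show ?thesis
    using card_side[OF Z(2)] by linarith
qed

section \<open>Long red paths\<close>

text \<open>State of a depth-first search in the red graph on \<open>B\<close>: \<open>S\<close> holds the finished
  vertices, \<open>P\<close> the current path (the stack) and \<open>U\<close> the unvisited ones.\<close>

definition dfs_invariant ::
  "(nat \<Rightarrow> nat \<Rightarrow> nat) \<Rightarrow> (bool \<times> nat) set \<Rightarrow> (bool \<Rightarrow> nat) \<Rightarrow>
    (bool \<times> nat) set \<Rightarrow> (bool \<times> nat) list \<Rightarrow> (bool \<times> nat) set \<Rightarrow> bool"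
  where "dfs_invariant c B m S P U \<longleftrightarrow>
    S \<union> set P \<union> U = B \<and> S \<inter> set P = {} \<and> S \<inter> U = {} \<and> set P \<inter> U = {} \<and>
    distinct P \<and> successively (red_edge c) P \<and> (\<forall>x\<in>S. \<forall>y\<in>U. \<not> red_edge c x y) \<and>
    (\<forall>s. card (S \<inter> side s) \<le> m s)"

text \<open>Once \<open>S\<close> holds \<open>m s\<close> vertices of side \<open>s\<close>, density leaves fewer than \<open>m (\<not> s)\<close>
  unvisited vertices on the other side, so the path holds the rest of it.\<close>

lemma dfs_invariant_length:
  assumes dense: "red_dense c b (m False) (m True)" and B: "B \<subseteq> vertices b" "finite B"
    and big: "\<forall>s. N + 2 * m s \<le> card (B \<inter> side s)"
    and inv: "dfs_invariant c B m S P U" and full: "m s \<le> card (S \<inter> side s)"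
  shows "N \<le> length P"
proof -
  have SPU: "S \<union> set P \<union> U = B" "distinct P" "\<forall>x\<in>S. \<forall>y\<in>U. \<not> red_edge c x y"
    "card (S \<inter> side (\<not> s)) \<le> m (\<not> s)"
    using inv unfolding dfs_invariant_def by blast+
  have "card (U \<inter> side (\<not> s)) < m (\<not> s)"
  proof (rule ccontr)
    assume "\<not> ?thesis"
    moreover have "S \<inter> side s \<subseteq> vertices b \<inter> side s" "U \<inter> side (\<not> s) \<subseteq> vertices b \<inter> side (\<not> s)"
      using SPU(1) B(1) by auto
    ultimately show False
      using red_dense_edge[OF dense] full SPU(3) by (meson IntD1 not_le)
  qed
  have fin: "finite S" "finite U"
    using SPU(1) B(2) finite_subset by blast+
  have "card (B \<inter> side (\<not> s)) \<le> card ((S \<inter> side (\<not> s) \<union> set P) \<union> U \<inter> side (\<not> s))"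
    using SPU(1) fin by (intro card_mono) auto
  also have "\<dots> \<le> card (S \<inter> side (\<not> s)) + card (set P) + card (U \<inter> side (\<not> s))"
    using card_Un_le[of "S \<inter> side (\<not> s)" "set P"] card_Un_le[of "S \<inter> side (\<not> s) \<union> set P" "U \<inter> side (\<not> s)"]
    by linarith
  finally show ?thesis
    using big[rule_format, of "\<not> s"] SPU(4) \<open>card (U \<inter> side (\<not> s)) < m (\<not> s)\<close> distinct_card[OF SPU(2)]
    by linarith
qed

lemma dfs_invariant_push:
  assumes "dfs_invariant c B m S P U" "u \<in> U" "P \<noteq> [] \<Longrightarrow> red_edge c (last P) u"
  shows "dfs_invariant c B m S (P @ [u]) (U - {u})"
  using assms unfolding dfs_invariant_def by (auto simp: successively_append_iff)

lemma dfs_invariant_pop: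
  assumes inv: "dfs_invariant c B m S P U" and "finite B" and "P \<noteq> []"
    and stuck: "\<forall>u\<in>U. \<not> red_edge c (last P) u" and small: "\<forall>s. card (S \<inter> side s) < m s"
  shows "dfs_invariant c B m (insert (last P) S) (butlast P) U"
proof -
  define x where "x = last P"
  have SPU: "S \<union> set P \<union> U = B" "S \<inter> set P = {}" "S \<inter> U = {}" "set P \<inter> U = {}" "distinct P"
    "successively (red_edge c) P" "\<forall>x\<in>S. \<forall>y\<in>U. \<not> red_edge c x y"
    using inv unfolding dfs_invariant_def by blast+
  have "finite S"
    using SPU(1) \<open>finite B\<close> finite_subset by blast
  have P: "P = butlast P @ [x]"
    using \<open>P \<noteq> []\<close> unfolding x_def by simp
  have "distinct (butlast P @ [x])"
    using SPU(5) P by simp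
  then have x: "set P = insert x (set (butlast P))" "x \<notin> set (butlast P)"
    using arg_cong[OF P, of set] by simp_all
  show ?thesis
    unfolding dfs_invariant_def x_def[symmetric]
  proof (intro conjI allI)
    show "successively (red_edge c) (butlast P)"
      using SPU(6) P successively_append_iff by metis
    show "card (insert x S \<inter> side s) \<le> m s" for s
    proof -
      have "card (insert x S \<inter> side s) \<le> card (insert x (S \<inter> side s))"
        using \<open>finite S\<close> by (intro card_mono) auto
      also have "\<dots> \<le> Suc (card (S \<inter> side s))"
        using \<open>finite S\<close> by (simp add: card_insert_if)
      finally show ?thesis
        using small[rule_format, of s] by linarith
    qed
  qed (use SPU x stuck in \<open>auto simp: distinct_butlast x_def\<close>)
qed

lemma dfs_invariant_step:
  assumes inv: "dfs_invariant c B m S P U" and "finite B"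
    and small: "\<forall>s. card (S \<inter> side s) < m s" and "m False \<le> card (B \<inter> side False)"
  obtains S' P' U' where "dfs_invariant c B m S' P' U'" "2 * card U' + length P' < 2 * card U + length P"
proof -
  have "finite U"
    using inv \<open>finite B\<close> finite_subset unfolding dfs_invariant_def by blast
  have push_measure: "2 * card (U - {u}) + length (P @ [u]) < 2 * card U + length P" if "u \<in> U" for u
    using that \<open>finite U\<close> card_gt_0_iff[of U] by (auto simp: card_Diff_singleton)
  consider (empty) "P = []" | (extend) u where "P \<noteq> []" "u \<in> U" "red_edge c (last P) u"
    | (stuck) "P \<noteq> []" "\<forall>u\<in>U. \<not> red_edge c (last P) u"
    by blast
  then show ?thesis
  proof cases
    case empty
    have "U \<noteq> {}"
    proof
      assume "U = {}"
      then have "S = B"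
        using inv empty unfolding dfs_invariant_def by simp
      then show False
        using small \<open>m False \<le> card (B \<inter> side False)\<close> not_le by blast
    qed
    then obtain u where "u \<in> U"
      by blast
    then show ?thesis
      using that dfs_invariant_push[OF inv] push_measure empty by blast
  next
    case extend
    then show ?thesis
      using that dfs_invariant_push[OF inv] push_measure by blast
  next
    case stuck
    then show ?thesis
      using that dfs_invariant_pop[OF inv \<open>finite B\<close> stuck(1,2) small] by simp
  qed
qed

lemma exists_long_red_path:
  assumes dense: "red_dense c b (m False) (m True)" and B: "B \<subseteq> vertices b" "finite B"
    and big: "\<forall>s. N + 2 * m s \<le> card (B \<inter> side s)"
  shows "\<exists>Q. distinct Q \<and> set Q \<subseteq> B \<and> successively (red_edge c) Q \<and> N \<le> length Q"
proof -
  have "dfs_invariant c B m S P U \<Longrightarrow> \<exists>Q. distinct Q \<and> set Q \<subseteq> B \<and> successively (red_edge c) Q \<and> N \<le> length Q"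
    for S P U
  proof (induction "2 * card U + length P" arbitrary: S P U rule: less_induct)
    case less
    show ?case
    proof (cases "\<exists>s. m s \<le> card (S \<inter> side s)")
      case True
      then have "N \<le> length P"
        using dfs_invariant_length[OF dense B big less.prems] by blast
      then show ?thesis
        using less.prems unfolding dfs_invariant_def by blast
    next
      case False
      then have "\<forall>s. card (S \<inter> side s) < m s"
        by (simp add: not_le)
      moreover have "m False \<le> card (B \<inter> side False)"
        using big[rule_format, of False] by linarith
      ultimately obtain S' P' U' where
        "dfs_invariant c B m S' P' U'" "2 * card U' + length P' < 2 * card U + length P"
        using dfs_invariant_step[OF less.prems B(2)] by blast
      then show ?thesis
        using less.hyps by blast
    qed
  qed
  moreover have "dfs_invariant c B m {} [] B"
    by (simp add: dfs_invariant_def)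
  ultimately show ?thesis .
qed

section \<open>Trees with doubling layers\<close>

definition tree_layers ::
  "(nat \<Rightarrow> nat \<Rightarrow> nat) \<Rightarrow> (bool \<times> nat) set \<Rightarrow> bool \<times> nat \<Rightarrow> nat \<Rightarrow> (nat \<Rightarrow> (bool \<times> nat) set) \<Rightarrow> bool"
  where "tree_layers c H p d W \<longleftrightarrow>
    W 0 = {p} \<and> (\<forall>j\<le>d. card (W j) = 2 ^ j) \<and> (\<forall>j. 0 < j \<longrightarrow> j \<le> d \<longrightarrow> W j \<subseteq> H) \<and>
    (\<forall>j<d. W (Suc j) \<subseteq> red_nbs c H (W j)) \<and> (\<forall>j\<le>d. \<forall>j'\<le>d. j \<noteq> j' \<longrightarrow> W j \<inter> W j' = {})"

lemma tree_layers_side: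
  assumes "tree_layers c H p d W" "j \<le> d"
  shows "W j \<subseteq> side (fst p \<noteq> odd j)"
  using assms(2)
proof (induction j)
  case 0
  then show ?case
    using assms(1) by (simp add: tree_layers_def)
next
  case (Suc j)
  then have "W (Suc j) \<subseteq> red_nbs c H (W j)"
    using assms(1) by (simp add: tree_layers_def)
  also have "\<dots> \<subseteq> side (\<not> (fst p \<noteq> odd j))"
    using red_nbs_side Suc by (simp only: Suc_leD)
  finally show ?case
    by simp
qed

lemma tree_layers_subset:
  assumes "tree_layers c H p d W" "j \<le> d"
  shows "W j \<subseteq> insert p H"
  using assms by (cases j) (auto simp: tree_layers_def)

lemma tree_layers_extend:
  assumes W: "tree_layers c H p e W"
    and S: "S \<subseteq> red_nbs c H (W e) - (\<Union>j\<le>e. W j)" "card S = 2 ^ Suc e"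
  shows "tree_layers c H p (Suc e) (W(Suc e := S))"
proof -
  have W_e: "W 0 = {p}" "\<forall>j\<le>e. card (W j) = 2 ^ j" "\<forall>j. 0 < j \<longrightarrow> j \<le> e \<longrightarrow> W j \<subseteq> H"
    "\<forall>j<e. W (Suc j) \<subseteq> red_nbs c H (W j)" "\<forall>j\<le>e. \<forall>j'\<le>e. j \<noteq> j' \<longrightarrow> W j \<inter> W j' = {}"
    using W unfolding tree_layers_def by simp_all
  have S_new: "S \<subseteq> H" "S \<subseteq> red_nbs c H (W e)" "S \<inter> W j = {}" if "j \<le> e" for j
    using S(1) red_nbs_subset[of c H "W e"] that by auto
  show ?thesis
    unfolding tree_layers_def
  proof (intro conjI allI impI)
    show "(W(Suc e := S)) 0 = {p}"
      using W_e(1) by simp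
  next
    fix j
    assume "j \<le> Suc e"
    then show "card ((W(Suc e := S)) j) = 2 ^ j"
      using W_e(2) S(2) unfolding le_Suc_eq by auto
  next
    fix j
    assume "0 < j" "j \<le> Suc e"
    then show "(W(Suc e := S)) j \<subseteq> H"
      using W_e(3) S_new(1) unfolding le_Suc_eq by auto
  next
    fix j
    assume "j < Suc e"
    then show "(W(Suc e := S)) (Suc j) \<subseteq> red_nbs c H ((W(Suc e := S)) j)"
      using W_e(4) S_new(2) unfolding less_Suc_eq by auto
  next
    fix j j'
    assume "j \<le> Suc e" "j' \<le> Suc e" "j \<noteq> j'"
    then show "(W(Suc e := S)) j \<inter> (W(Suc e := S)) j' = {}"
      using W_e(5) S_new(3) unfolding le_Suc_eq by auto
  qed
qed

lemma tree_layers_many_new_nbs: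
  assumes W: "tree_layers c H p e W" and exp: "expands c H t"
    and root: "2 \<le> card (red_nbs c H {p})" and small: "0 < e \<Longrightarrow> 2 ^ e \<le> t"
  shows "2 ^ Suc e \<le> card (red_nbs c H (W e) - (\<Union>j\<le>e. W j))"
proof -
  have "W e \<subseteq> side (fst p \<noteq> odd e)"
    by (rule tree_layers_side[OF W order_refl])
  moreover from this have "red_nbs c H (W e) \<subseteq> side (\<not> (fst p \<noteq> odd e))"
    by (rule red_nbs_side)
  ultimately have "red_nbs c H (W e) \<inter> W e = {}"
    using side_disjoint by blast
  then have new: "red_nbs c H (W e) - (\<Union>j\<le>e. W j) = red_nbs c H (W e) - (\<Union>j<e. W j)"
    by (auto simp: le_less)
  show ?thesis
  proof (cases "e = 0")
    case True
    moreover have "W 0 = {p}"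
      using W by (simp add: tree_layers_def)
    ultimately show ?thesis
      using root new by simp
  next
    case False
    have card_W: "card (W j) = 2 ^ j" if "j \<le> e" for j
      using W that by (simp add: tree_layers_def)
    have "W e \<subseteq> H \<inter> side (fst p \<noteq> odd e)"
      using W tree_layers_side[OF W] False by (simp add: tree_layers_def)
    from exp[unfolded expands_def, rule_format, OF this] have "3 * 2 ^ e < card (red_nbs c H (W e))"
      using small False card_W[of e] by simp
    moreover have "card (\<Union>j<e. W j) + 1 \<le> 2 ^ e"
    proof -
      have "card (\<Union>j<e. W j) \<le> (\<Sum>j<e. card (W j))"
        by (rule card_UN_le) simp
      also have "\<dots> = (\<Sum>j<e. 2 ^ j)"
        using card_W by simp
      also have "\<dots> = 2 ^ e - 1"
        by (simp add: sum_power2 atLeast0LessThan[symmetric])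
      finally show ?thesis
        using le_diff_conv2[of 1 "2 ^ e"] by simp
    qed
    moreover have "card (red_nbs c H (W e)) - card (\<Union>j<e. W j) \<le> card (red_nbs c H (W e) - (\<Union>j<e. W j))"
    proof (rule diff_card_le_card_Diff, rule finite_UN_I)
      show "finite (W j)" if "j \<in> {..<e}" for j
        using card_W[of j] that by (intro card_ge_0_finite) simp
    qed simp
    ultimately show ?thesis
      unfolding new power_Suc by linarith
  qed
qed

lemma exists_tree_layers:
  assumes exp: "expands c H t"
    and root: "0 < d \<Longrightarrow> 2 \<le> card (red_nbs c H {p})" and small: "\<And>j. 0 < j \<Longrightarrow> j < d \<Longrightarrow> 2 ^ j \<le> t"
  shows "\<exists>W. tree_layers c H p d W"
  using root small
proof (induction d)
  case 0
  have "tree_layers c H p 0 (\<lambda>_. {p})"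
    by (simp add: tree_layers_def)
  then show ?case
    by blast
next
  case (Suc e)
  then obtain W where W: "tree_layers c H p e W"
    by fastforce
  have "2 ^ Suc e \<le> card (red_nbs c H (W e) - (\<Union>j\<le>e. W j))"
    by (rule tree_layers_many_new_nbs[OF W exp]) (use Suc.prems in auto)
  then obtain S where "S \<subseteq> red_nbs c H (W e) - (\<Union>j\<le>e. W j)" "card S = 2 ^ Suc e"
    by (meson obtain_subset_with_card_n)
  then show ?case
    using tree_layers_extend[OF W] by blast
qed

lemma tree_layers_walk:
  assumes W: "tree_layers c H p d W" and "j \<le> d" "v \<in> W j"
  shows "\<exists>ps. length ps = Suc j \<and> hd ps = p \<and> last ps = v \<and> (\<forall>i\<le>j. ps ! i \<in> W i) \<and>
    successively (red_edge c) ps"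
  using assms(2,3)
proof (induction j arbitrary: v)
  case 0
  then have "v = p"
    using W by (simp add: tree_layers_def)
  then show ?case
    using 0 by (intro exI[of _ "[p]"]) simp
next
  case (Suc j)
  have "W (Suc j) \<subseteq> red_nbs c H (W j)"
    using W Suc.prems(1) by (simp add: tree_layers_def)
  with Suc.prems(2) have "v \<in> red_nbs c H (W j)"
    by blast
  then obtain u where "u \<in> W j" "red_edge c u v"
    by (auto simp: red_nbs_def)
  then obtain ps where ps: "length ps = Suc j" "hd ps = p" "last ps = u" "\<forall>i\<le>j. ps ! i \<in> W i"
    "successively (red_edge c) ps"
    using Suc.IH[OF Suc_leD[OF Suc.prems(1)] \<open>u \<in> W j\<close>] by blast
  then have "ps \<noteq> []"
    by auto
  have "\<forall>i\<le>Suc j. (ps @ [v]) ! i \<in> W i"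
    using ps(1,4) Suc.prems(2) by (auto simp: nth_append le_Suc_eq)
  moreover have "successively (red_edge c) (ps @ [v])"
    using ps(3,5) \<open>ps \<noteq> []\<close> \<open>red_edge c u v\<close> by (simp add: successively_append_iff)
  ultimately show ?case
    using ps(1,2) \<open>ps \<noteq> []\<close> by (intro exI[of _ "ps @ [v]"]) simp
qed

lemma tree_layers_path:
  assumes W: "tree_layers c H p d W" and "v \<in> W d"
  shows "\<exists>ps. length ps = Suc d \<and> hd ps = p \<and> last ps = v \<and> distinct ps \<and> set (tl ps) \<subseteq> H \<and>
    successively (red_edge c) ps"
proof -
  obtain ps where ps: "length ps = Suc d" "hd ps = p" "last ps = v" "\<forall>i\<le>d. ps ! i \<in> W i"
    "successively (red_edge c) ps"
    using tree_layers_walk[OF W order_refl \<open>v \<in> W d\<close>] by blast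
  have disjoint: "\<forall>i\<le>d. \<forall>i'\<le>d. i \<noteq> i' \<longrightarrow> W i \<inter> W i' = {}" and inner: "\<forall>i. 0 < i \<longrightarrow> i \<le> d \<longrightarrow> W i \<subseteq> H"
    using W by (simp_all add: tree_layers_def)
  have "distinct ps"
    unfolding distinct_conv_nth
  proof (intro allI impI)
    fix i i'
    assume "i < length ps" "i' < length ps" "i \<noteq> i'"
    then show "ps ! i \<noteq> ps ! i'"
      using ps(1,4) disjoint by (metis disjoint_iff less_Suc_eq_le)
  qed
  moreover have "set (tl ps) \<subseteq> H"
  proof
    fix x
    assume "x \<in> set (tl ps)"
    then obtain k where "k < d" "x = ps ! Suc k"
      using ps(1) by (auto simp: in_set_conv_nth nth_tl)
    then show "x \<in> H"
      using ps(4) inner by (meson Suc_leI subsetD zero_less_Suc)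
  qed
  ultimately show ?thesis
    using ps by blast
qed

section \<open>Closing red cycles\<close>

lemma red_walk_side:
  assumes "successively (red_edge c) L" "j < length L"
  shows "fst (L ! j) = (fst (hd L) \<noteq> odd j)"
  using assms(2)
proof (induction j)
  case 0
  then show ?case
    by (simp add: hd_conv_nth)
next
  case (Suc j)
  then have "red_edge c (L ! j) (L ! Suc j)"
    using successively_nth[OF assms(1)] by blast
  then show ?case
    using Suc red_edge_side by fastforce
qed

lemma successively_append_tl:
  assumes "successively R xs" "successively R ys" "xs \<noteq> []" "last xs = hd ys"
  shows "successively R (xs @ tl ys)"
  using assms by (cases ys) (auto simp: successively_append_iff successively_Cons)

lemma last_append_tl: "xs \<noteq> [] \<Longrightarrow> ys \<noteq> [] \<Longrightarrow> last xs = hd ys \<Longrightarrow> last (xs @ tl ys) = last ys"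
  by (cases ys) auto

lemma red_closed_walk_colours:
  assumes L: "length L = 2 * k" and walk: "successively (red_edge c) L"
    and closed: "red_edge c (last L) (hd L)" and left: "\<not> fst (hd L)" and "i < k"
  shows "c (snd (L ! (2 * i))) (snd (L ! (2 * i + 1))) = 1"
    and "c (snd (L ! (2 * ((i + 1) mod k)))) (snd (L ! (2 * i + 1))) = 1"
proof -
  have edge: "red_edge c (L ! j) (L ! Suc j)" if "Suc j < 2 * k" for j
    using successively_nth[OF walk] that L by simp
  have "fst (L ! (2 * i)) = False" "fst (L ! (2 * i + 1)) = True"
    using red_walk_side[OF walk, of "2 * i"] red_walk_side[OF walk, of "2 * i + 1"] left L \<open>i < k\<close>
    by simp_all
  then show "c (snd (L ! (2 * i))) (snd (L ! (2 * i + 1))) = 1"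
    using red_edge_colour(1)[OF edge[of "2 * i"]] \<open>i < k\<close> by simp
  show "c (snd (L ! (2 * ((i + 1) mod k)))) (snd (L ! (2 * i + 1))) = 1"
  proof (cases "i + 1 < k")
    case True
    then show ?thesis
      using red_edge_colour(2)[OF edge[of "2 * i + 1"]] \<open>fst (L ! (2 * i + 1)) = True\<close> by simp
  next
    case False
    then have "i + 1 = k" "L \<noteq> []" "2 * i + 1 = length L - 1"
      using \<open>i < k\<close> L by auto
    then have "L ! (2 * i + 1) = last L" "L ! (2 * ((i + 1) mod k)) = hd L"
      by (simp_all add: last_conv_nth hd_conv_nth)
    then show ?thesis
      using red_edge_colour(2)[OF closed] \<open>fst (L ! (2 * i + 1)) = True\<close> by simp
  qed
qed

lemma red_cycle_copy_from_left:
  assumes L: "length L = n" "even n" "distinct L" "set L \<subseteq> vertices b"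
    and walk: "successively (red_edge c) L" and closed: "red_edge c (last L) (hd L)"
    and left: "\<not> fst (hd L)"
  shows "has_cycle_copy b c 1 n"
proof -
  define k where "k = n div 2"
  have n: "length L = 2 * k"
    using L(1,2) unfolding k_def by simp
  define a d where "a i = snd (L ! (2 * i))" and "d i = snd (L ! (2 * i + 1))" for i
  have nth_eq: "j = j'" if "j < 2 * k" "j' < 2 * k" "snd (L ! j) = snd (L ! j')" "odd j = odd j'" for j j'
  proof -
    have "L ! j = L ! j'"
      using that red_walk_side[OF walk] n by (simp add: prod_eq_iff)
    then show ?thesis
      using that L(3) n nth_eq_iff_index_eq by metis
  qed
  have "inj_on a {..<k}"
  proof (rule inj_onI)
    fix i i'
    assume "i \<in> {..<k}" "i' \<in> {..<k}" "a i = a i'"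
    then show "i = i'"
      using nth_eq[of "2 * i" "2 * i'"] unfolding a_def by simp
  qed
  moreover have "inj_on d {..<k}"
  proof (rule inj_onI)
    fix i i'
    assume "i \<in> {..<k}" "i' \<in> {..<k}" "d i = d i'"
    then show "i = i'"
      using nth_eq[of "2 * i + 1" "2 * i' + 1"] unfolding d_def by simp
  qed
  moreover have "snd (L ! j) < b" if "j < 2 * k" for j
    using subsetD[OF L(4) nth_mem[of j L]] that n by simp
  then have "a ` {..<k} \<subseteq> {..<b}" "d ` {..<k} \<subseteq> {..<b}"
    unfolding a_def d_def by auto
  ultimately show ?thesis
    using red_closed_walk_colours[OF n walk closed left] unfolding has_cycle_copy_def k_def a_def d_def
    by blast
qed

lemma red_cycle_copy:
  assumes L: "length L = n" "even n" "0 < n" "distinct L" "set L \<subseteq> vertices b"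
    and walk: "successively (red_edge c) L" and closed: "red_edge c (last L) (hd L)"
  shows "has_cycle_copy b c 1 n"
proof (cases "fst (hd L)")
  case False
  then show ?thesis
    using red_cycle_copy_from_left[OF L(1,2,4,5) walk closed] by simp
next
  case True
  obtain x xs where L_eq: "L = x # xs"
    using L(1,3) by (cases L) auto
  then have "xs \<noteq> []"
    using L(1,2) by auto
  have "red_edge c x (hd xs)" "successively (red_edge c) xs"
    using walk \<open>xs \<noteq> []\<close> unfolding L_eq by (simp_all add: successively_Cons)
  moreover have "\<not> fst (hd xs)"
    using red_edge_side[OF \<open>red_edge c x (hd xs)\<close>] True L_eq by simp
  moreover have "successively (red_edge c) (xs @ [x])"
    using \<open>successively (red_edge c) xs\<close> closed \<open>xs \<noteq> []\<close> unfolding L_eq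
    by (simp add: successively_append_iff)
  ultimately show ?thesis
    using red_cycle_copy_from_left[of "xs @ [x]" n b c] L \<open>xs \<noteq> []\<close> red_edge_sym unfolding L_eq
    by auto
qed

lemma successively_take: "successively R xs \<Longrightarrow> successively R (take n xs)"
  using successively_append_iff[of R "take n xs" "drop n xs"] by simp

lemma successively_drop: "successively R xs \<Longrightarrow> successively R (drop n xs)"
  using successively_append_iff[of R "take n xs" "drop n xs"] by simp

text \<open>Down \<open>ps1\<close> from its end to the start of \<open>seg\<close>, along \<open>seg\<close>, then along \<open>ps2\<close>; the
  edge between the ends of \<open>ps1\<close> and \<open>ps2\<close> closes the cycle.\<close>

lemma red_cycle_copy_glue:
  assumes walks: "successively (red_edge c) ps1" "successively (red_edge c) seg"
      "successively (red_edge c) ps2"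
    and ne: "ps1 \<noteq> []" "seg \<noteq> []" "ps2 \<noteq> []" and joints: "hd ps1 = hd seg" "last seg = hd ps2"
    and distinct: "distinct ps1" "distinct seg" "distinct ps2"
    and disjoint: "set ps1 \<inter> set (tl seg) = {}" "(set ps1 \<union> set (tl seg)) \<inter> set (tl ps2) = {}"
    and "set ps1 \<union> set seg \<union> set ps2 \<subseteq> vertices b"
    and closing: "red_edge c (last ps1) (last ps2)"
    and n: "length ps1 + length (tl seg) + length (tl ps2) = n" "even n"
  shows "has_cycle_copy b c 1 n"
proof -
  have "successively (red_edge c) (rev ps1)"
    unfolding successively_rev red_edge_flip by (rule walks(1))
  then have first: "successively (red_edge c) (rev ps1 @ tl seg)" "last (rev ps1 @ tl seg) = hd ps2"
    using walks(2) ne joints by (simp_all add: successively_append_tl last_append_tl last_rev)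
  define L where "L = (rev ps1 @ tl seg) @ tl ps2"
  have "successively (red_edge c) L"
    unfolding L_def by (rule successively_append_tl[OF first(1) walks(3)]) (use first(2) ne in simp_all)
  moreover have "last L = last ps2" "hd L = last ps1"
    unfolding L_def using last_append_tl[of "rev ps1 @ tl seg" ps2] first(2) ne by (simp_all add: hd_rev)
  moreover have "length L = n" "0 < n"
    using n(1) ne unfolding L_def by auto
  moreover have "set (tl seg) \<subseteq> set seg" "set (tl ps2) \<subseteq> set ps2"
    using list.set_sel(2)[OF ne(2)] list.set_sel(2)[OF ne(3)] by blast+
  then have "distinct L" "set L \<subseteq> vertices b"
    unfolding L_def using distinct disjoint \<open>set ps1 \<union> set seg \<union> set ps2 \<subseteq> vertices b\<close>
    by (auto simp: distinct_tl)
  ultimately show ?thesis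
    using red_cycle_copy[of L n b c] n(2) closing red_edge_sym by auto
qed

lemma tree_layers_red_edge:
  assumes dense: "red_dense c b m1 m2"
    and W1: "tree_layers c H1 p d1 W1" "insert p H1 \<subseteq> vertices b" "m1 \<le> 2 ^ d1"
    and W2: "tree_layers c H2 q d2 W2" "insert q H2 \<subseteq> vertices b" "m2 \<le> 2 ^ d2"
    and opposite: "(fst q \<noteq> odd d2) = (\<not> (fst p \<noteq> odd d1))"
  obtains s1 s2 where "s1 \<in> W1 d1" "s2 \<in> W2 d2" "red_edge c s1 s2"
proof -
  have "W1 d1 \<subseteq> vertices b" "W2 d2 \<subseteq> vertices b"
    using tree_layers_subset[OF W1(1) order_refl] tree_layers_subset[OF W2(1) order_refl] W1(2) W2(2)
    by blast+
  moreover have "W1 d1 \<subseteq> side (fst p \<noteq> odd d1)" "W2 d2 \<subseteq> side (\<not> (fst p \<noteq> odd d1))"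
    using tree_layers_side[OF W1(1) order_refl] tree_layers_side[OF W2(1) order_refl]
    unfolding opposite .
  ultimately have "W1 d1 \<subseteq> vertices b \<inter> side (fst p \<noteq> odd d1)"
    "W2 d2 \<subseteq> vertices b \<inter> side (\<not> (fst p \<noteq> odd d1))"
    by blast+
  moreover have "m1 \<le> card (W1 d1)" "m2 \<le> card (W2 d2)"
    using W1 W2 by (simp_all add: tree_layers_def)
  ultimately show ?thesis
    using dense that unfolding red_dense_def by blast
qed

lemma red_cycle_through_path:
  assumes dense: "red_dense c b m1 m2"
    and V: "V1 \<subseteq> vertices b" "V2 \<subseteq> vertices b" "VB \<subseteq> vertices b"
      "V1 \<inter> V2 = {}" "V1 \<inter> VB = {}" "V2 \<inter> VB = {}"
    and Q: "distinct Q" "set Q \<subseteq> VB" "successively (red_edge c) Q" "i + lam < length Q"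
    and W1: "tree_layers c H1 (Q ! i) d1 W1" "H1 \<subseteq> V1" "m1 \<le> 2 ^ d1"
    and W2: "tree_layers c H2 (Q ! (i + lam)) d2 W2" "H2 \<subseteq> V2" "m2 \<le> 2 ^ d2"
    and n: "n = d1 + lam + d2 + 1" "even n"
  shows "has_cycle_copy b c 1 n"
proof -
  define p q where "p = Q ! i" and "q = Q ! (i + lam)"
  define seg where "seg = take (Suc lam) (drop i Q)"
  have seg: "length seg = Suc lam" "hd seg = p" "last seg = q" "distinct seg" "set seg \<subseteq> VB"
    "successively (red_edge c) seg" "seg \<noteq> []"
    using Q set_take_subset[of "Suc lam" "drop i Q"] set_drop_subset[of i Q]
    by (auto simp: seg_def p_def q_def hd_drop_conv_nth last_conv_nth successively_take successively_drop)
  then have "p \<in> VB" "q \<in> VB"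
    using hd_in_set last_in_set by auto
  have "distinct (hd seg # tl seg)"
    using seg(4,7) by simp
  then have "p \<notin> set (tl seg)"
    using seg(2) by simp
  have "seg ! lam = q"
    using seg(1,3,7) last_conv_nth[of seg] by simp
  then have "fst q = (fst p \<noteq> odd lam)"
    using red_walk_side[OF seg(6), of lam] seg(1,2) by simp
  then have opposite: "(fst q \<noteq> odd d2) = (\<not> (fst p \<noteq> odd d1))"
    using n by auto
  have "insert p H1 \<subseteq> vertices b" "insert q H2 \<subseteq> vertices b"
    using W1(2) W2(2) V(1-3) \<open>p \<in> VB\<close> \<open>q \<in> VB\<close> by blast+
  then obtain s1 s2 where "s1 \<in> W1 d1" "s2 \<in> W2 d2" "red_edge c s1 s2"
    using tree_layers_red_edge[OF dense W1(1)[folded p_def] _ W1(3) W2(1)[folded q_def] _ W2(3) opposite]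
    by blast
  obtain ps1 where ps1: "length ps1 = Suc d1" "hd ps1 = p" "last ps1 = s1" "distinct ps1"
    "set (tl ps1) \<subseteq> H1" "successively (red_edge c) ps1"
    using tree_layers_path[OF W1(1) \<open>s1 \<in> W1 d1\<close>] unfolding p_def by blast
  obtain ps2 where ps2: "length ps2 = Suc d2" "hd ps2 = q" "last ps2 = s2" "distinct ps2"
    "set (tl ps2) \<subseteq> H2" "successively (red_edge c) ps2"
    using tree_layers_path[OF W2(1) \<open>s2 \<in> W2 d2\<close>] unfolding q_def by blast
  have "ps1 \<noteq> []" "ps2 \<noteq> []"
    using ps1(1) ps2(1) by auto
  have "set ps1 \<subseteq> insert p V1"
    using ps1(1,2,5) W1(2) by (cases ps1) auto
  moreover have "set ps2 \<subseteq> insert q V2" "set (tl ps2) \<subseteq> V2"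
    using ps2(1,2,5) W2(2) by (cases ps2; auto)+
  moreover have "set (tl seg) \<subseteq> VB - {p}"
    using list.set_sel(2)[OF seg(7)] seg(5) \<open>p \<notin> set (tl seg)\<close> by blast
  ultimately have disjoint: "set ps1 \<inter> set (tl seg) = {}" "(set ps1 \<union> set (tl seg)) \<inter> set (tl ps2) = {}"
    "set ps1 \<union> set seg \<union> set ps2 \<subseteq> vertices b"
    using seg(5) V \<open>p \<in> VB\<close> \<open>q \<in> VB\<close> by blast+
  show ?thesis
    by (rule red_cycle_copy_glue[OF ps1(6) seg(6) ps2(6) \<open>ps1 \<noteq> []\<close> seg(7) \<open>ps2 \<noteq> []\<close> _ _ ps1(4) seg(4)
          ps2(4) disjoint])
      (use ps1(1-3) ps2(1-3) seg(1-3) n \<open>red_edge c s1 s2\<close> in simp_all)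
qed

lemma exists_window_avoiding:
  assumes Q: "distinct Q" and Z: "finite Z1" "finite Z2" "card Z1 + card Z2 + lam < length Q"
  shows "\<exists>i. i + lam < length Q \<and> Q ! i \<notin> Z1 \<and> Q ! (i + lam) \<notin> Z2"
proof -
  define I where "I = {..<length Q - lam}"
  define B1 B2 where "B1 = {i \<in> I. Q ! i \<in> Z1}" and "B2 = {i \<in> I. Q ! (i + lam) \<in> Z2}"
  have "card B1 \<le> card Z1"
    by (rule card_inj_on_le[of "\<lambda>i. Q ! i" _ Z1])
      (use Q Z(1) in \<open>auto simp: B1_def I_def inj_on_def nth_eq_iff_index_eq\<close>)
  moreover have "card B2 \<le> card Z2"
    by (rule card_inj_on_le[of "\<lambda>i. Q ! (i + lam)" _ Z2])
      (use Q Z(2) in \<open>auto simp: B2_def I_def inj_on_def nth_eq_iff_index_eq\<close>)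
  moreover have "card (B1 \<union> B2) \<le> card B1 + card B2"
    by (rule card_Un_le)
  ultimately have "card (B1 \<union> B2) < card I"
    using Z(3) by (simp add: I_def)
  have "\<not> I \<subseteq> B1 \<union> B2"
  proof
    assume "I \<subseteq> B1 \<union> B2"
    moreover have "finite (B1 \<union> B2)"
      by (simp add: B1_def B2_def I_def)
    ultimately have "card I \<le> card (B1 \<union> B2)"
      by (simp add: card_mono)
    with \<open>card (B1 \<union> B2) < card I\<close> show False
      by simp
  qed
  then obtain i where "i \<in> I" "i \<notin> B1 \<union> B2"
    by blast
  moreover have "i + lam < length Q"
    using \<open>i \<in> I\<close> unfolding I_def by simp
  ultimately show ?thesis
    unfolding B1_def B2_def by blast
qed

lemma exists_expanding_core:
  assumes dense: "red_dense c b (m False) (m True)" and pos: "\<forall>s. 0 < m s"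
    and V: "V \<subseteq> vertices b" "\<forall>s. 6 * (m False + m True) \<le> card (V \<inter> side s)"
  obtains H where "H \<subseteq> V" "finite H" "expands c H (m False + m True)"
    "\<forall>s. m False + m True \<le> card (H \<inter> side s)"
proof -
  define t where "t = m False + m True"
  have sides: "m s + m (\<not> s) = t" for s
    unfolding t_def by (cases s) auto
  have "finite V"
    using finite_subset[OF V(1) finite_vertices] .
  have "3 * (m s + t) + 2 * m (\<not> s) \<le> card (V \<inter> side (\<not> s))" for s
    using V(2)[rule_format, of "\<not> s"] sides[of s] unfolding t_def[symmetric] distrib_left by linarith
  then obtain H where H: "H \<subseteq> V" "expands c H t"
    "\<forall>s. card (V \<inter> side s) \<le> card (H \<inter> side s) + m s + 3 * m (\<not> s)"
    using exists_expanding_subset[OF dense V(1) \<open>finite V\<close> pos] by blast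
  have "t \<le> card (H \<inter> side s)" for s
    using H(3)[rule_format, of s] V(2)[rule_format, of s] sides[of s] unfolding t_def[symmetric] by linarith
  then show ?thesis
    using that H(1,2) finite_subset[OF H(1) \<open>finite V\<close>] unfolding t_def by blast
qed

lemma red_cycle_in_parts:
  assumes dense: "red_dense c b (m False) (m True)" and pos: "\<forall>s. 0 < m s"
    and V: "V1 \<subseteq> vertices b" "V2 \<subseteq> vertices b" "VB \<subseteq> vertices b"
      "V1 \<inter> V2 = {}" "V1 \<inter> VB = {}" "V2 \<inter> VB = {}"
    and big: "\<forall>s. 6 * (m False + m True) \<le> card (V1 \<inter> side s)"
      "\<forall>s. 6 * (m False + m True) \<le> card (V2 \<inter> side s)"
      "\<forall>s. (2 * m False + 3 * m True) + 2 * m s \<le> card (VB \<inter> side s)"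
    and d1: "m False \<le> 2 ^ d1" "\<forall>j<d1. 2 ^ j < m False"
    and d2: "m True \<le> 2 ^ d2" "\<forall>j<d2. 2 ^ j < m True"
    and n: "d1 + d2 + 1 \<le> n" "even n" "n \<le> m True"
  shows "has_cycle_copy b c 1 n"
proof -
  define t where "t = m False + m True"
  obtain H1 where H1: "H1 \<subseteq> V1" "finite H1" "expands c H1 t" "\<forall>s. t \<le> card (H1 \<inter> side s)"
    using exists_expanding_core[OF dense pos V(1) big(1)] unfolding t_def by blast
  obtain H2 where H2: "H2 \<subseteq> V2" "finite H2" "expands c H2 t" "\<forall>s. t \<le> card (H2 \<inter> side s)"
    using exists_expanding_core[OF dense pos V(2) big(2)] unfolding t_def by blast
  obtain Q where Q: "distinct Q" "set Q \<subseteq> VB" "successively (red_edge c) Q"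
    "2 * m False + 3 * m True \<le> length Q"
    using exists_long_red_path[OF dense V(3) finite_subset[OF V(3) finite_vertices] big(3)] by blast
  define Z1 Z2 where "Z1 = {v \<in> VB. card (red_nbs c H1 {v}) \<le> 1}"
    and "Z2 = {v \<in> VB. card (red_nbs c H2 {v}) \<le> 1}"
  have "finite Z1" "finite Z2"
    unfolding Z1_def Z2_def using finite_subset[OF V(3) finite_vertices] by simp_all
  have "H1 \<subseteq> vertices b" "H2 \<subseteq> vertices b" "Z1 \<subseteq> vertices b" "Z2 \<subseteq> vertices b"
    using H1(1) H2(1) V(1-3) unfolding Z1_def Z2_def by auto
  have "card Z1 + 2 \<le> t"
    unfolding t_def
    by (rule card_vertices_few_red_nbs[OF dense \<open>H1 \<subseteq> vertices b\<close> H1(2) \<open>Z1 \<subseteq> vertices b\<close> \<open>finite Z1\<close>])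
      (use H1(4) in \<open>simp_all add: Z1_def t_def\<close>)
  have "card Z2 + 2 \<le> t"
    unfolding t_def
    by (rule card_vertices_few_red_nbs[OF dense \<open>H2 \<subseteq> vertices b\<close> H2(2) \<open>Z2 \<subseteq> vertices b\<close> \<open>finite Z2\<close>])
      (use H2(4) in \<open>simp_all add: Z2_def t_def\<close>)
  define lam where "lam = n - 1 - d1 - d2"
  have n_eq: "n = d1 + lam + d2 + 1"
    using n(1) unfolding lam_def by simp
  then have "card Z1 + card Z2 + lam < length Q"
    using \<open>card Z1 + 2 \<le> t\<close> \<open>card Z2 + 2 \<le> t\<close> Q(4) n(3) unfolding t_def by linarith
  then obtain i where i: "i + lam < length Q" "Q ! i \<notin> Z1" "Q ! (i + lam) \<notin> Z2"
    using exists_window_avoiding[OF Q(1) \<open>finite Z1\<close> \<open>finite Z2\<close>] by blast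
  then have "Q ! i \<in> VB" "Q ! (i + lam) \<in> VB"
    using Q(2) nth_mem[of i Q] nth_mem[of "i + lam" Q] by auto
  then have roots: "2 \<le> card (red_nbs c H1 {Q ! i})" "2 \<le> card (red_nbs c H2 {Q ! (i + lam)})"
    using i(2,3) unfolding Z1_def Z2_def by auto
  have "2 ^ j \<le> t" if "j < d1" for j
    using d1(2) that unfolding t_def by fastforce
  then obtain W1 where W1: "tree_layers c H1 (Q ! i) d1 W1"
    using exists_tree_layers[OF H1(3), of d1 "Q ! i"] roots(1) by blast
  have "2 ^ j \<le> t" if "j < d2" for j
    using d2(2) that unfolding t_def by fastforce
  then obtain W2 where W2: "tree_layers c H2 (Q ! (i + lam)) d2 W2"
    using exists_tree_layers[OF H2(3), of d2 "Q ! (i + lam)"] roots(2) by blast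
  show ?thesis
    by (rule red_cycle_through_path[OF dense V Q(1-3) i(1) W1 H1(1) d1(1) W2 H2(1) d2(1) n_eq n(2)])
qed

lemma ceiling_log2_bounds:
  assumes "0 < m"
  shows "0 \<le> \<lceil>log 2 (real m)\<rceil>" and "m \<le> 2 ^ nat \<lceil>log 2 (real m)\<rceil>"
    and "\<forall>j < nat \<lceil>log 2 (real m)\<rceil>. 2 ^ j < m"
proof -
  have "1 \<le> real m"
    using assms by simp
  then have "0 \<le> log 2 (real m)"
    by simp
  then show "0 \<le> \<lceil>log 2 (real m)\<rceil>"
    by simp
  have "real m = 2 powr log 2 (real m)"
    using \<open>1 \<le> real m\<close> by simp
  also have "\<dots> \<le> 2 powr real (nat \<lceil>log 2 (real m)\<rceil>)"
    using \<open>0 \<le> \<lceil>log 2 (real m)\<rceil>\<close> by (intro powr_mono) (simp_all add: le_of_int_ceiling)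
  finally show "m \<le> 2 ^ nat \<lceil>log 2 (real m)\<rceil>"
    by (simp add: powr_realpow flip: of_nat_le_iff)
  show "\<forall>j < nat \<lceil>log 2 (real m)\<rceil>. 2 ^ j < m"
  proof (intro allI impI)
    fix j
    assume "j < nat \<lceil>log 2 (real m)\<rceil>"
    then have "real j < log 2 (real m)"
      by linarith
    then have "2 powr real j < real m"
      using \<open>1 \<le> real m\<close> by (simp add: less_log_iff)
    then show "2 ^ j < m"
      by (simp add: powr_realpow flip: of_nat_less_iff)
  qed
qed

lemma card_block_side: "card ((UNIV \<times> {a..<a'}) \<inter> side s) = a' - a"
proof -
  have "(UNIV \<times> {a..<a'}) \<inter> side s = Pair s ` {a..<a'}"
    by auto
  then show ?thesis
    by (simp add: card_image inj_on_def)
qed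

lemma red_cycle_if_red_dense:
  assumes dense: "red_dense c b m1 m2" and "0 < m1" "0 < m2" and b: "32 * m1 + 49 * m2 \<le> b"
    and d1: "m1 \<le> 2 ^ d1" "\<forall>j<d1. 2 ^ j < m1" and d2: "m2 \<le> 2 ^ d2" "\<forall>j<d2. 2 ^ j < m2"
    and n: "d1 + d2 + 1 \<le> n" "even n" "n \<le> m2"
  shows "has_cycle_copy b c 1 n"
proof -
  define k where "k = 6 * (m1 + m2)"
  define m where "m s = (if s then m2 else m1)" for s
  show ?thesis
  proof (rule red_cycle_in_parts[of c b m "UNIV \<times> {0..<k}" "UNIV \<times> {k..<2 * k}" "UNIV \<times> {2 * k..<b}"])
    show "red_dense c b (m False) (m True)" "\<forall>s. 0 < m s"
      using assms(1-3) by (simp_all add: m_def)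
    show "UNIV \<times> {0..<k} \<subseteq> vertices b" "UNIV \<times> {k..<2 * k} \<subseteq> vertices b"
      "UNIV \<times> {2 * k..<b} \<subseteq> vertices b"
      using b by (auto simp: k_def)
    show "(UNIV \<times> {0..<k}) \<inter> (UNIV \<times> {k..<2 * k}) = {}" "(UNIV \<times> {0..<k}) \<inter> (UNIV \<times> {2 * k..<b}) = {}"
      "(UNIV \<times> {k..<2 * k}) \<inter> (UNIV \<times> {2 * k..<b}) = {}"
      by (simp_all add: Times_Int_Times)
    show "\<forall>s. 6 * (m False + m True) \<le> card ((UNIV \<times> {0..<k}) \<inter> side s)"
      "\<forall>s. 6 * (m False + m True) \<le> card ((UNIV \<times> {k..<2 * k}) \<inter> side s)"
      unfolding card_block_side by (simp_all add: m_def k_def)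
    show "\<forall>s. 2 * m False + 3 * m True + 2 * m s \<le> card ((UNIV \<times> {2 * k..<b}) \<inter> side s)"
    proof
      fix s
      have "2 * m False + 3 * m True + 2 * m s + 2 * k \<le> b"
        using b by (cases s) (simp_all add: m_def k_def)
      then show "2 * m False + 3 * m True + 2 * m s \<le> card ((UNIV \<times> {2 * k..<b}) \<inter> side s)"
        unfolding card_block_side by (subst le_diff_conv2) linarith+
    qed
    show "m False \<le> 2 ^ d1" "\<forall>j<d1. 2 ^ j < m False" "m True \<le> 2 ^ d2" "\<forall>j<d2. 2 ^ j < m True"
      using d1 d2 by (simp_all add: m_def)
    show "d1 + d2 + 1 \<le> n" "even n" "n \<le> m True"
      using n by (simp_all add: m_def)
  qed
qed

theorem lemma2p4:
  fixes m1 m2 n :: nat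
  assumes "m1 > 0" and "m2 > 0" and "even n"
    and "m2 \<ge> n"
    and "int n \<ge> \<lceil>log 2 (real m1)\<rceil> + \<lceil>log 2 (real m2)\<rceil> + 1"
  shows "BR_cycle_K n m1 m2 \<le> 32 * m1 + 49 * m2"
proof -
  define d1 d2 where "d1 = nat \<lceil>log 2 (real m1)\<rceil>" and "d2 = nat \<lceil>log 2 (real m2)\<rceil>"
  note d1 = ceiling_log2_bounds[OF assms(1), folded d1_def]
  note d2 = ceiling_log2_bounds[OF assms(2), folded d2_def]
  have "int d1 = \<lceil>log 2 (real m1)\<rceil>" "int d2 = \<lceil>log 2 (real m2)\<rceil>"
    using d1(1) d2(1) unfolding d1_def d2_def by simp_all
  then have "int (d1 + d2 + 1) \<le> int n"
    using assms(5) by simp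
  then have "d1 + d2 + 1 \<le> n"
    by (simp only: of_nat_le_iff)
  define b where "b = 32 * m1 + 49 * m2"
  have "has_cycle_copy b c 1 n" if "red_dense c b m1 m2" for c
    using red_cycle_if_red_dense[OF that assms(1,2) _ d1(2,3) d2(2,3) \<open>d1 + d2 + 1 \<le> n\<close> assms(3,4)]
    by (simp add: b_def)
  then have "\<forall>c. (\<forall>x<b. \<forall>y<b. c x y \<in> {1, 2}) \<longrightarrow> has_cycle_copy b c 1 n \<or> has_Kst_copy b c 2 m1 m2"
    using red_dense_if_no_blue_K by meson
  then have "BR_cycle_K n m1 m2 \<le> b"
    unfolding BR_cycle_K_def by (rule Least_le)
  then show ?thesis
    by (simp add: b_def)
qed

end
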